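(* Let $G$ be a graph with a vertex $r$ that belongs to every minimum vertex cover of $G$ (so $\mathrm{OPT}(G-r)+1=\mathrm{OPT}(G)$), and let $Y$ be a minimal blocking set of $G$. Then $Y$ is also a minimal blocking set of $G-r$.
   Context: $\mathrm{OPT}(G)$ is the minimum vertex cover size; minimum vertex covers have size $\mathrm{OPT}(G)$. $Y\subseteq V(G)$ is a blocking set if no minimum vertex cover contains $Y$; minimal if no proper subset is a blocking set. *)

theory Defs
  imports Main
begin

definition graph :: "'a set \<Rightarrow> 'a set set \<Rightarrow> bool" where
  "graph V E \<longleftrightarrow> finite V \<and> (\<forall>e\<in>E. e \<subseteq> V \<and> card e = 2)"

definition del_vert_V :: "'a set \<Rightarrow> 'a \<Rightarrow> 'a set" where
  "del_vert_V V r = V - {r}"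

definition del_vert_E :: "'a set set \<Rightarrow> 'a \<Rightarrow> 'a set set" where
  "del_vert_E E r = {e \<in> E. r \<notin> e}"

definition vertex_cover :: "'a set \<Rightarrow> 'a set set \<Rightarrow> 'a set \<Rightarrow> bool" where
  "vertex_cover V E C \<longleftrightarrow> C \<subseteq> V \<and> (\<forall>e\<in>E. e \<inter> C \<noteq> {})"

definition OPT :: "'a set \<Rightarrow> 'a set set \<Rightarrow> nat" where
  "OPT V E = Min {card C | C. vertex_cover V E C}"

definition min_vertex_cover :: "'a set \<Rightarrow> 'a set set \<Rightarrow> 'a set \<Rightarrow> bool" where
  "min_vertex_cover V E C \<longleftrightarrow> vertex_cover V E C \<and> card C = OPT V E"

definition blocking_set :: "'a set \<Rightarrow> 'a set set \<Rightarrow> 'a set \<Rightarrow> bool" where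
  "blocking_set V E Y \<longleftrightarrow> Y \<subseteq> V \<and> \<not> (\<exists>C. min_vertex_cover V E C \<and> Y \<subseteq> C)"

definition minimal_blocking_set :: "'a set \<Rightarrow> 'a set set \<Rightarrow> 'a set \<Rightarrow> bool" where
  "minimal_blocking_set V E Y \<longleftrightarrow> blocking_set V E Y \<and> (\<forall>Z. Z \<subset> Y \<longrightarrow> \<not> blocking_set V E Z)"

end

theory Submission
  imports Defs
begin

text \<open>If \<open>r\<close> lies in every minimum vertex cover of \<open>G\<close>, then \<open>C \<mapsto> C - {r}\<close> and
  \<open>C \<mapsto> insert r C\<close> are mutually inverse bijections between the minimum vertex covers of
  \<open>G\<close> and of \<open>G - r\<close>, and \<open>OPT(G) = OPT(G - r) + 1\<close>. Hence a set avoiding \<open>r\<close> is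
  blocking in \<open>G\<close> iff it is blocking in \<open>G - r\<close>. A minimal blocking set \<open>Y\<close> of \<open>G\<close> avoids
  \<open>r\<close>: otherwise \<open>Y - {r}\<close> would extend to a minimum cover, which contains \<open>r\<close> and so all
  of \<open>Y\<close>. So \<open>Y\<close> and all its subsets avoid \<open>r\<close>, and minimality transfers to \<open>G - r\<close>.\<close>

lemma finite_vertex_cover_cards:
  assumes "finite V"
  shows "finite {card C | C. vertex_cover V E C}"
proof -
  have "{card C | C. vertex_cover V E C} \<subseteq> {0..card V}"
    using assms by (auto simp: vertex_cover_def intro: card_mono)
  then show ?thesis
    using finite_subset by blast
qed

lemma OPT_le_card_vertex_cover:
  assumes "finite V" "vertex_cover V E C"
  shows "OPT V E \<le> card C"
  unfolding OPT_def using finite_vertex_cover_cards[OF assms(1)] assms(2)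
  by (intro Min_le) auto

lemma min_vertex_cover_exists:
  assumes "finite V" "vertex_cover V E C"
  shows "\<exists>C. min_vertex_cover V E C"
proof -
  have "{card C | C. vertex_cover V E C} \<noteq> {}"
    using assms(2) by auto
  then have "OPT V E \<in> {card C | C. vertex_cover V E C}"
    unfolding OPT_def using Min_in finite_vertex_cover_cards[OF assms(1)] by blast
  then show ?thesis
    by (auto simp: min_vertex_cover_def)
qed

lemma finite_vertex_cover:
  assumes "finite V" "vertex_cover V E C"
  shows "finite C"
  using assms by (auto simp: vertex_cover_def intro: finite_subset)

lemma graph_vertex_cover_vertices:
  assumes "graph V E"
  shows "vertex_cover V E V"
  unfolding vertex_cover_def
proof (intro conjI ballI)
  fix e
  assume "e \<in> E"
  then have "e \<subseteq> V" "card e = 2"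
    using assms by (auto simp: graph_def)
  then show "e \<inter> V \<noteq> {}"
    by (auto simp: Int_absorb2)
qed simp

lemma vertex_cover_del_vert:
  assumes "vertex_cover V E C"
  shows "vertex_cover (del_vert_V V r) (del_vert_E E r) (C - {r})"
  using assms by (auto simp: vertex_cover_def del_vert_V_def del_vert_E_def)

lemma vertex_cover_insert_del_vert:
  assumes "r \<in> V" "vertex_cover (del_vert_V V r) (del_vert_E E r) C"
  shows "vertex_cover V E (insert r C)"
  using assms by (auto simp: vertex_cover_def del_vert_V_def del_vert_E_def)

lemma vertex_cover_del_vert_notin:
  assumes "vertex_cover (del_vert_V V r) (del_vert_E E r) C"
  shows "r \<notin> C"
  using assms by (auto simp: vertex_cover_def del_vert_V_def)

lemma minimal_blocking_set_avoids:
  assumes r_in_min_covers: "\<forall>C. min_vertex_cover V E C \<longrightarrow> r \<in> C"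
    and "minimal_blocking_set V E Y"
  shows "r \<notin> Y"
proof
  assume "r \<in> Y"
  then have "\<not> blocking_set V E (Y - {r})"
    using assms(2) by (auto simp: minimal_blocking_set_def)
  moreover have "Y - {r} \<subseteq> V"
    using assms(2) by (auto simp: minimal_blocking_set_def blocking_set_def)
  ultimately obtain C where "min_vertex_cover V E C" "Y - {r} \<subseteq> C"
    by (auto simp: blocking_set_def)
  moreover have "\<not> (\<exists>C. min_vertex_cover V E C \<and> Y \<subseteq> C)"
    using assms(2) by (simp add: minimal_blocking_set_def blocking_set_def)
  ultimately show False
    using r_in_min_covers by blast
qed

context
  fixes V :: "'a set" and E :: "'a set set" and r :: 'a
  assumes graph: "graph V E"
    and r_vertex: "r \<in> V"
    and r_in_min_covers: "\<forall>C. min_vertex_cover V E C \<longrightarrow> r \<in> C"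
begin

private lemma finite_vertices: "finite V" "finite (del_vert_V V r)"
  using graph by (auto simp: graph_def del_vert_V_def)

lemma OPT_del_vert: "OPT V E = OPT (del_vert_V V r) (del_vert_E E r) + 1"
proof (rule antisym)
  obtain C where C: "min_vertex_cover V E C"
    using min_vertex_cover_exists[OF finite_vertices(1) graph_vertex_cover_vertices[OF graph]]
    by blast
  then have cover: "vertex_cover V E C" and "r \<in> C"
    using r_in_min_covers by (auto simp: min_vertex_cover_def)
  then have "card C = card (C - {r}) + 1"
    using card.remove[OF finite_vertex_cover[OF finite_vertices(1) cover]] by simp
  moreover have "OPT (del_vert_V V r) (del_vert_E E r) \<le> card (C - {r})"
    using OPT_le_card_vertex_cover[OF finite_vertices(2) vertex_cover_del_vert[OF cover]] .
  ultimately show "OPT (del_vert_V V r) (del_vert_E E r) + 1 \<le> OPT V E"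
    using C by (simp add: min_vertex_cover_def)
  obtain D where D: "min_vertex_cover (del_vert_V V r) (del_vert_E E r) D"
    using min_vertex_cover_exists[OF finite_vertices(2) vertex_cover_del_vert[OF cover]] by blast
  then have cover': "vertex_cover (del_vert_V V r) (del_vert_E E r) D"
    by (simp add: min_vertex_cover_def)
  have "OPT V E \<le> card (insert r D)"
    using OPT_le_card_vertex_cover[OF finite_vertices(1)
        vertex_cover_insert_del_vert[OF r_vertex cover']] .
  also have "\<dots> = OPT (del_vert_V V r) (del_vert_E E r) + 1"
    using D finite_vertex_cover[OF finite_vertices(2) cover'] vertex_cover_del_vert_notin[OF cover']
    by (simp add: min_vertex_cover_def)
  finally show "OPT V E \<le> OPT (del_vert_V V r) (del_vert_E E r) + 1" .
qed

lemma min_vertex_cover_del_vert: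
  assumes "min_vertex_cover V E C"
  shows "min_vertex_cover (del_vert_V V r) (del_vert_E E r) (C - {r})"
proof -
  have cover: "vertex_cover V E C" and "r \<in> C" "card C = OPT V E"
    using assms r_in_min_covers by (auto simp: min_vertex_cover_def)
  then have "card (C - {r}) = OPT (del_vert_V V r) (del_vert_E E r)"
    using OPT_del_vert by simp
  then show ?thesis
    using vertex_cover_del_vert[OF cover] by (simp add: min_vertex_cover_def)
qed

lemma min_vertex_cover_insert_del_vert:
  assumes "min_vertex_cover (del_vert_V V r) (del_vert_E E r) C"
  shows "min_vertex_cover V E (insert r C)"
proof -
  have cover: "vertex_cover (del_vert_V V r) (del_vert_E E r) C"
    using assms by (simp add: min_vertex_cover_def)
  then have "card (insert r C) = OPT V E"
    using assms OPT_del_vert finite_vertex_cover[OF finite_vertices(2) cover]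
      vertex_cover_del_vert_notin[OF cover]
    by (simp add: min_vertex_cover_def)
  then show ?thesis
    using vertex_cover_insert_del_vert[OF r_vertex cover] by (simp add: min_vertex_cover_def)
qed

lemma blocking_set_del_vert_iff:
  assumes "r \<notin> Z"
  shows "blocking_set (del_vert_V V r) (del_vert_E E r) Z \<longleftrightarrow> blocking_set V E Z"
proof -
  have "(\<exists>C. min_vertex_cover (del_vert_V V r) (del_vert_E E r) C \<and> Z \<subseteq> C)
      \<longleftrightarrow> (\<exists>C. min_vertex_cover V E C \<and> Z \<subseteq> C)"
  proof
    assume "\<exists>C. min_vertex_cover (del_vert_V V r) (del_vert_E E r) C \<and> Z \<subseteq> C"
    then show "\<exists>C. min_vertex_cover V E C \<and> Z \<subseteq> C"
      using min_vertex_cover_insert_del_vert by blast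
  next
    assume "\<exists>C. min_vertex_cover V E C \<and> Z \<subseteq> C"
    then obtain C where "min_vertex_cover V E C" "Z \<subseteq> C"
      by blast
    then show "\<exists>C. min_vertex_cover (del_vert_V V r) (del_vert_E E r) C \<and> Z \<subseteq> C"
      using min_vertex_cover_del_vert assms by blast
  qed
  moreover have "Z \<subseteq> del_vert_V V r \<longleftrightarrow> Z \<subseteq> V"
    using assms by (auto simp: del_vert_V_def)
  ultimately show ?thesis
    by (simp add: blocking_set_def)
qed

end

theorem mainTheorem19:
  fixes V :: "'a set" and E :: "'a set set" and r :: 'a and Y :: "'a set"
  assumes "graph V E"
    and "r \<in> V"
    and "\<forall>C. min_vertex_cover V E C \<longrightarrow> r \<in> C"
    and "minimal_blocking_set V E Y"
  shows "minimal_blocking_set (del_vert_V V r) (del_vert_E E r) Y"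
proof -
  have "r \<notin> Y"
    using minimal_blocking_set_avoids[OF assms(3,4)] .
  then have transfer: "blocking_set (del_vert_V V r) (del_vert_E E r) Z \<longleftrightarrow> blocking_set V E Z"
    if "Z \<subseteq> Y" for Z
    using blocking_set_del_vert_iff[OF assms(1-3), of Z] that by blast
  have "blocking_set (del_vert_V V r) (del_vert_E E r) Y"
    using transfer[of Y] assms(4) by (simp add: minimal_blocking_set_def)
  moreover have "\<not> blocking_set (del_vert_V V r) (del_vert_E E r) Z" if "Z \<subset> Y" for Z
    using transfer[of Z] that assms(4) by (auto simp: minimal_blocking_set_def)
  ultimately show ?thesis
    by (simp add: minimal_blocking_set_def)
qed

end
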